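(* Let $U$ be an open subset of $\mathbb{R}^n$ with the Euclidean metric $d$, and let $C\subset\mathbb{R}^n$ be a metric coordinatizing set for $U$ with respect to $d$. Let $\phi:(t_1,t_2)\to U$ be a continuous curve and $t\in(t_1,t_2)$ with $\phi(t)\notin C$. Then $\phi$ is differentiable at $t$ (in the usual sense) if and only if $\phi$ is metric-coordinate-wise differentiable at $t$, i.e. for every $c\in C$ the function $s\mapsto\phi_c(s):=d(\phi(s),c)$ is differentiable at $s=t$.
   Context: A set $C\subset\mathbb{R}^n$ is a metric coordinatizing set for $U\subset\mathbb{R}^n$ if for all $x,y\in U$ with $x\neq y$ there is $c\in C$ with $d(x,c)\neq d(y,c)$. *)

theory Defs
  imports "HOL-Analysis.Analysis"
begin

definition metric_coordinatizing :: "'a::metric_space set \<Rightarrow> 'a set \<Rightarrow> bool" where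
  "metric_coordinatizing C U \<longleftrightarrow>
     (\<forall>x\<in>U. \<forall>y\<in>U. x \<noteq> y \<longrightarrow> (\<exists>c\<in>C. dist x c \<noteq> dist y c))"

end

theory Submission
  imports Defs
begin

text \<open>By polarization, \<open>dist (\<phi> s) c\<^sup>2 - dist (\<phi> s) c\<^sub>0\<^sup>2\<close> is an affine function of
  \<open>\<phi> s \<bullet> (c - c\<^sub>0)\<close>, so the component of \<open>\<phi>\<close> along every vector of the span \<open>V\<close> of the
  differences \<open>c - c\<^sub>0\<close> (\<open>c \<in> C\<close>) is differentiable at \<open>t\<close>. Because \<open>C\<close> separates the points
  of the open set \<open>U\<close>, the vectors \<open>c - \<phi> t\<close> span the whole space (otherwise \<open>\<phi> t \<plusminus> \<epsilon> w\<close>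
  would be equidistant from all of \<open>C\<close> for a normal vector \<open>w\<close>). Hence \<open>V\<close> has codimension at
  most one, and a unit normal \<open>v\<close> of \<open>V\<close> satisfies \<open>(\<phi> t - c\<^sub>0) \<bullet> v \<noteq> 0\<close>. The missing
  component \<open>h = (\<phi> - c\<^sub>0) \<bullet> v\<close> has \<open>h\<^sup>2 = \<parallel>\<phi> - c\<^sub>0\<parallel>\<^sup>2 - \<Sum>\<^sub>b ((\<phi> - c\<^sub>0) \<bullet> b)\<^sup>2\<close> for an orthonormal
  basis \<open>b\<close> of \<open>V\<close>, a differentiable function; as \<open>h\<close> is continuous and \<open>h t \<noteq> 0\<close>, we have
  \<open>h = sgn (h t) * sqrt (h\<^sup>2)\<close> near \<open>t\<close>, so \<open>h\<close> is differentiable at \<open>t\<close> as well.\<close>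

lemma metric_coordinatizing_span_UNIV:
  fixes C U :: "'a::euclidean_space set"
  assumes "open U" "metric_coordinatizing C U" "x \<in> U"
  shows "span ((\<lambda>c. c - x) ` C) = UNIV"
proof (rule ccontr)
  assume "span ((\<lambda>c. c - x) ` C) \<noteq> UNIV"
  then obtain w where "w \<noteq> 0" and w: "\<And>y. y \<in> span ((\<lambda>c. c - x) ` C) \<Longrightarrow> orthogonal w y"
    using orthogonal_to_subspace_exists_gen[of "(\<lambda>c. c - x) ` C" UNIV]
    by (metis span_UNIV top.not_eq_extremum)
  obtain e where "e > 0" "ball x e \<subseteq> U"
    using assms open_contains_ball by blast
  define s where "s = e / (2 * norm w)"
  have "s > 0" "norm (s *\<^sub>R w) < e"
    using \<open>e > 0\<close> \<open>w \<noteq> 0\<close> by (auto simp: s_def)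
  then have "x + s *\<^sub>R w \<in> U" "x - s *\<^sub>R w \<in> U"
    using \<open>ball x e \<subseteq> U\<close> by (auto simp: dist_norm)
  moreover have "x + s *\<^sub>R w \<noteq> x - s *\<^sub>R w"
    using \<open>s > 0\<close> \<open>w \<noteq> 0\<close> by (simp add: eq_neg_iff_add_eq_0 flip: scaleR_add_left)
  moreover have "dist (x + s *\<^sub>R w) c = dist (x - s *\<^sub>R w) c" if "c \<in> C" for c
  proof -
    have "orthogonal (x - c) (r *\<^sub>R w)" for r
      using w[of "c - x"] that span_base[of "c - x"]
      by (auto simp: orthogonal_def inner_diff_left inner_diff_right inner_commute)
    then have "(dist (x + r *\<^sub>R w) c)\<^sup>2 = (norm (x - c))\<^sup>2 + (norm (r *\<^sub>R w))\<^sup>2" for r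
      using norm_add_Pythagorean[of "x - c" "r *\<^sub>R w"] by (simp add: dist_norm algebra_simps)
    from this[of s] this[of "- s"] have "(dist (x + s *\<^sub>R w) c)\<^sup>2 = (dist (x - s *\<^sub>R w) c)\<^sup>2"
      by simp
    then show ?thesis
      by simp
  qed
  ultimately show False
    using assms(2) unfolding metric_coordinatizing_def by blast
qed

lemma subspace_inner_differentiable:
  fixes f :: "'a::real_normed_vector \<Rightarrow> 'b::real_inner"
  shows "subspace {w. (\<lambda>s. f s \<bullet> w) differentiable (at x within T)}"
  unfolding subspace_def
proof (intro conjI ballI allI; simp only: mem_Collect_eq)
  show "(\<lambda>s. f s \<bullet> 0) differentiable (at x within T)"
    by simp
  show "(\<lambda>s. f s \<bullet> (v + w)) differentiable (at x within T)"
    if "(\<lambda>s. f s \<bullet> v) differentiable (at x within T)"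
      and "(\<lambda>s. f s \<bullet> w) differentiable (at x within T)" for v w
    using that by (simp add: inner_add_right)
  show "(\<lambda>s. f s \<bullet> (c *\<^sub>R w)) differentiable (at x within T)"
    if "(\<lambda>s. f s \<bullet> w) differentiable (at x within T)" for c w
    using that by simp
qed

lemma differentiable_inner_span:
  fixes f :: "'a::real_normed_vector \<Rightarrow> 'b::real_inner"
  assumes "\<And>w. w \<in> S \<Longrightarrow> (\<lambda>s. f s \<bullet> w) differentiable (at x within T)" "w \<in> span S"
  shows "(\<lambda>s. f s \<bullet> w) differentiable (at x within T)"
  using assms span_minimal[OF _ subspace_inner_differentiable, of S f x T] by blast

lemma differentiable_spanning_componentwise:
  fixes f :: "'a::real_normed_vector \<Rightarrow> 'b::euclidean_space"
  assumes "span S = UNIV" "\<And>w. w \<in> S \<Longrightarrow> (\<lambda>s. f s \<bullet> w) differentiable (at x within T)"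
  shows "f differentiable (at x within T)"
proof -
  have "(\<lambda>s. f s \<bullet> b) differentiable (at x within T)" for b
    using differentiable_inner_span[of S f, OF assms(2)] assms(1) by simp
  then show ?thesis
    by (simp add: differentiable_componentwise_within[of f])
qed

lemma differentiable_inner_diff_of_dist:
  fixes f :: "'a::real_normed_vector \<Rightarrow> 'b::real_inner"
  assumes "(\<lambda>s. dist (f s) a) differentiable (at x within T)"
    and "(\<lambda>s. dist (f s) b) differentiable (at x within T)"
  shows "(\<lambda>s. (f s - b) \<bullet> (a - b)) differentiable (at x within T)"
proof -
  have polarization: "(f s - b) \<bullet> (a - b) =
      ((dist (f s) b)\<^sup>2 - (dist (f s) a)\<^sup>2 + (norm (a - b))\<^sup>2) / 2" for s
    unfolding dist_norm power2_norm_eq_inner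
    by (simp add: inner_diff_left inner_diff_right inner_commute)
  show ?thesis
    unfolding polarization using assms by simp
qed

lemma power2_norm_eq_sum_inner_orthonormal:
  fixes x :: "'a::euclidean_space"
  assumes "pairwise orthogonal B" "\<And>b. b \<in> B \<Longrightarrow> norm b = 1" "finite B" "x \<in> span B"
  shows "(norm x)\<^sup>2 = (\<Sum>b\<in>B. (x \<bullet> b)\<^sup>2)"
proof -
  have "(norm x)\<^sup>2 = x \<bullet> (\<Sum>b\<in>B. (x \<bullet> b) *\<^sub>R b)"
    using orthonormal_basis_expand[OF assms(1,2,4,3)] by (simp add: power2_norm_eq_inner)
  also have "\<dots> = (\<Sum>b\<in>B. (x \<bullet> b)\<^sup>2)"
    by (simp add: inner_sum_right power2_eq_square)
  finally show ?thesis .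
qed

lemma differentiable_if_power2_differentiable:
  fixes h :: "real \<Rightarrow> real"
  assumes "(\<lambda>s. (h s)\<^sup>2) differentiable (at t)" "isCont h t" "h t \<noteq> 0"
  shows "h differentiable (at t)"
proof -
  have sqrt: "sqrt differentiable (at ((h t)\<^sup>2))"
    by (metis DERIV_real_sqrt assms(3) real_differentiable_def zero_less_power2)
  then have "(\<lambda>s. \<bar>h s\<bar>) differentiable (at t)"
    using differentiable_compose[OF sqrt assms(1)] by simp
  then have "(\<lambda>s. sgn (h t) * \<bar>h s\<bar>) differentiable (at t)"
    by simp
  moreover have "\<forall>\<^sub>F s in at t. sgn (h t) * \<bar>h s\<bar> = h s"
  proof -
    have "\<forall>\<^sub>F s in at t. dist (h s) (h t) < \<bar>h t\<bar>"
      using assms(2,3) unfolding isCont_def by (intro tendstoD) auto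
    then show ?thesis
    proof eventually_elim
      case (elim s)
      then have "sgn (h s) = sgn (h t)"
        by (cases "h t > 0") (auto simp: sgn_if dist_real_def)
      then show ?case
        by (metis sgn_mult_abs)
    qed
  qed
  ultimately show ?thesis
    unfolding differentiable_def
    by (metis has_derivative_transform_eventually[where s = UNIV] sgn_mult_abs UNIV_I)
qed

lemma orthonormal_basis_insert_normal:
  fixes x :: "'a::euclidean_space"
  assumes span: "span (insert x S) = UNIV" and "x \<notin> span S"
  obtains B v where "B \<subseteq> span S" "finite B" "v \<notin> B" "pairwise orthogonal (insert v B)"
    "\<And>e. e \<in> insert v B \<Longrightarrow> norm e = 1" "span (insert v B) = UNIV" "x \<bullet> v \<noteq> 0"
proof -
  obtain p q where p: "p \<in> span S" and q: "\<And>w. w \<in> span S \<Longrightarrow> orthogonal q w"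
    and x: "x = p + q"
    using orthogonal_subspace_decomp_exists by metis
  have "q \<noteq> 0"
    using p x \<open>x \<notin> span S\<close> by auto
  define v where "v = q /\<^sub>R norm q"
  have "norm v = 1"
    using \<open>q \<noteq> 0\<close> by (simp add: v_def)
  have v_orth: "orthogonal v w" if "w \<in> span S" for w
    using q[OF that] by (simp add: v_def orthogonal_def)
  obtain B where B: "B \<subseteq> span S" "pairwise orthogonal B" "\<And>b. b \<in> B \<Longrightarrow> norm b = 1"
    "independent B" "span B = span S"
    using orthonormal_basis_subspace[of "span S"] by (metis subspace_span)
  have "v \<notin> B"
  proof
    assume "v \<in> B"
    then have "orthogonal v v"
      using v_orth B(1) by blast
    then show False
      using \<open>norm v = 1\<close> by (metis orthogonal_self norm_zero zero_neq_one)
  qed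
  have "p \<in> span (insert v B)"
    using p B(5) span_mono[OF subset_insertI] by blast
  moreover have "q \<in> span (insert v B)"
  proof -
    have "q = norm q *\<^sub>R v"
      using \<open>q \<noteq> 0\<close> by (simp add: v_def)
    then show ?thesis
      by (metis span_mul span_base insertI1)
  qed
  ultimately have "x \<in> span (insert v B)"
    unfolding x by (rule span_add)
  moreover have "S \<subseteq> span (insert v B)"
    using B(5) span_superset[of S] span_mono[OF subset_insertI] by blast
  ultimately have "span (insert v B) = UNIV"
    using span span_minimal[of "insert x S" "span (insert v B)"] by auto
  moreover have "x \<bullet> v \<noteq> 0"
  proof -
    have "p \<bullet> q = 0"
      using q[OF p] by (simp add: orthogonal_def inner_commute)
    then have "x \<bullet> v = (q \<bullet> q) / norm q"
      by (simp add: x v_def inner_add_left divide_inverse mult.commute)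
    also have "\<dots> = norm q"
      by (simp add: dot_square_norm power2_eq_square)
    finally show ?thesis
      using \<open>q \<noteq> 0\<close> by simp
  qed
  moreover have "pairwise orthogonal (insert v B)"
    using B(1,2) v_orth by (auto simp: pairwise_insert orthogonal_commute)
  moreover have "finite B"
    using B(4) by (simp add: finiteI_independent)
  ultimately show ?thesis
    using that B(1,3) \<open>v \<notin> B\<close> \<open>norm v = 1\<close> by blast
qed

lemma differentiable_if_inner_and_norm_differentiable:
  fixes f :: "real \<Rightarrow> 'a::euclidean_space"
  assumes inner: "\<And>w. w \<in> S \<Longrightarrow> (\<lambda>s. f s \<bullet> w) differentiable (at t)"
    and norm: "(\<lambda>s. (norm (f s))\<^sup>2) differentiable (at t)"
    and cont: "isCont f t"
    and span: "span (insert (f t) S) = UNIV"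
  shows "f differentiable (at t)"
proof (cases "f t \<in> span S")
  case True
  then have "span S = UNIV"
    using span by (simp add: span_redundant)
  then show ?thesis
    by (rule differentiable_spanning_componentwise[OF _ inner])
next
  case False
  obtain B v where B: "B \<subseteq> span S" "finite B" "v \<notin> B"
    and E: "pairwise orthogonal (insert v B)" "\<And>e. e \<in> insert v B \<Longrightarrow> norm e = 1"
      "span (insert v B) = UNIV"
    and "f t \<bullet> v \<noteq> 0"
    using orthonormal_basis_insert_normal[OF span False] by blast
  have B_inner: "(\<lambda>s. f s \<bullet> b) differentiable (at t)" if "b \<in> B" for b
    using differentiable_inner_span[OF inner] B(1) that by blast
  define h where "h s = f s \<bullet> v" for s
  have "(h s)\<^sup>2 = (norm (f s))\<^sup>2 - (\<Sum>b\<in>B. (f s \<bullet> b)\<^sup>2)" for s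
    using power2_norm_eq_sum_inner_orthonormal[OF E(1,2), of "f s"] E(3) B(2,3)
    by (simp add: h_def)
  then have "(\<lambda>s. (h s)\<^sup>2) differentiable (at t)"
    using norm B_inner B(2) by simp
  moreover have "isCont h t"
    unfolding h_def using cont by (intro continuous_intros)
  moreover have "h t \<noteq> 0"
    using \<open>f t \<bullet> v \<noteq> 0\<close> by (simp add: h_def)
  ultimately have "h differentiable (at t)"
    by (rule differentiable_if_power2_differentiable)
  show ?thesis
  proof (rule differentiable_spanning_componentwise[OF E(3)])
    fix w assume "w \<in> insert v B"
    then show "(\<lambda>s. f s \<bullet> w) differentiable (at t)"
      using B_inner \<open>h differentiable (at t)\<close> by (auto simp: h_def[abs_def])
  qed
qed

lemma differentiable_if_metric_coordinates_differentiable: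
  fixes C U :: "'a::euclidean_space set" and \<phi> :: "real \<Rightarrow> 'a"
  assumes "open U" "metric_coordinatizing C U" "\<phi> t \<in> U" "isCont \<phi> t"
    and dist: "\<And>c. c \<in> C \<Longrightarrow> (\<lambda>s. dist (\<phi> s) c) differentiable (at t)"
  shows "\<phi> differentiable (at t)"
proof -
  have span: "span ((\<lambda>c. c - \<phi> t) ` C) = UNIV"
    using metric_coordinatizing_span_UNIV assms(1-3) by blast
  then obtain c0 where "c0 \<in> C"
    using span_empty by (metis UNIV_not_singleton image_empty equals0I)
  define f where "f s = \<phi> s - c0" for s
  have "(\<lambda>s. f s \<bullet> w) differentiable (at t)" if w: "w \<in> (\<lambda>c. c - c0) ` C" for w
  proof -
    obtain c where "c \<in> C" "w = c - c0"
      using w by blast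
    then show ?thesis
      unfolding f_def using differentiable_inner_diff_of_dist[OF dist dist[OF \<open>c0 \<in> C\<close>]] by simp
  qed
  moreover have "(\<lambda>s. (norm (f s))\<^sup>2) differentiable (at t)"
    using dist[OF \<open>c0 \<in> C\<close>] by (simp add: f_def dist_norm)
  moreover have "isCont f t"
    unfolding f_def using assms(4) by (intro continuous_intros)
  moreover have "span (insert (f t) ((\<lambda>c. c - c0) ` C)) = UNIV"
  proof -
    let ?E = "insert (f t) ((\<lambda>c. c - c0) ` C)"
    have "c - \<phi> t \<in> span ?E" if "c \<in> C" for c
    proof -
      have "(c - c0) - f t \<in> span ?E"
        using that by (intro span_diff span_base) auto
      then show ?thesis
        by (simp add: f_def)
    qed
    then have "span ((\<lambda>c. c - \<phi> t) ` C) \<subseteq> span ?E"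
      by (intro span_minimal subspace_span) auto
    then show ?thesis
      using span by auto
  qed
  ultimately have "f differentiable (at t)"
    by (rule differentiable_if_inner_and_norm_differentiable)
  then have "(\<lambda>s. f s + c0) differentiable (at t)"
    by simp
  then show ?thesis
    by (simp add: f_def)
qed

lemma differentiable_dist:
  fixes \<phi> :: "'a::real_normed_vector \<Rightarrow> 'b::real_inner"
  assumes "\<phi> differentiable (at t)" "\<phi> t \<noteq> c"
  shows "(\<lambda>s. dist (\<phi> s) c) differentiable (at t)"
proof -
  have "norm differentiable (at (\<phi> t - c))"
    using assms(2) by (intro differentiable_norm_at) auto
  moreover have "(\<lambda>s. \<phi> s - c) differentiable (at t)"
    using assms(1) by (intro differentiable_diff differentiable_const)
  ultimately show ?thesis
    unfolding dist_norm by (rule differentiable_compose)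
qed

theorem theorem4p1:
  fixes U C :: "(real ^ 'n) set" and \<phi> :: "real \<Rightarrow> real ^ 'n"
    and t1 t2 t :: real
  assumes "open U"
    and "metric_coordinatizing C U"
    and "\<phi> ` {t1<..<t2} \<subseteq> U"
    and "continuous_on {t1<..<t2} \<phi>"
    and "t \<in> {t1<..<t2}"
    and "\<phi> t \<notin> C"
  shows "\<phi> differentiable (at t) \<longleftrightarrow>
         (\<forall>c\<in>C. (\<lambda>s. dist (\<phi> s) c) differentiable (at t))"
proof
  assume "\<phi> differentiable (at t)"
  then show "\<forall>c\<in>C. (\<lambda>s. dist (\<phi> s) c) differentiable (at t)"
    using assms(6) differentiable_dist by metis
next
  assume dist: "\<forall>c\<in>C. (\<lambda>s. dist (\<phi> s) c) differentiable (at t)"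
  have "\<phi> t \<in> U"
    using assms(3,5) by blast
  moreover have "isCont \<phi> t"
    using assms(4,5) by (simp add: continuous_on_eq_continuous_at)
  ultimately show "\<phi> differentiable (at t)"
    by (rule differentiable_if_metric_coordinates_differentiable[OF assms(1,2)]) (use dist in blast)
qed

end
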